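(* Let $P$ be a finite non-abelian $p$-group, $p$ a prime. Then $P$ is exponent-critical and has more than one abelian maximal subgroup (i.e. $P$ is of type $\mathcal{B}$) if and only if $P$ is $2$-generated and its derived subgroup $P'$ has order $p$.
   Context: A finite group $G$ is exponent-critical if $\exp(G)$ is not the least common multiple of the exponents of the proper non-abelian subgroups of $G$. An exponent-critical $p$-group is said to be of type $\mathcal{B}$ if it has more than one abelian maximal subgroup. *)

theory Defs
  imports "HOL-Algebra.Algebra"
begin

definition grp_exp :: "('a, 'b) monoid_scheme \<Rightarrow> 'a set \<Rightarrow> nat" where
  "grp_exp G H = Lcm (group.ord G ` H)"

definition abelian_set :: "('a, 'b) monoid_scheme \<Rightarrow> 'a set \<Rightarrow> bool" where
  "abelian_set G H \<longleftrightarrow> (\<forall>x\<in>H. \<forall>y\<in>H. x \<otimes>\<^bsub>G\<^esub> y = y \<otimes>\<^bsub>G\<^esub> x)"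

definition exponent_critical :: "('a, 'b) monoid_scheme \<Rightarrow> bool" where
  "exponent_critical G \<longleftrightarrow>
     grp_exp G (carrier G) \<noteq>
       Lcm {grp_exp G H | H. subgroup H G \<and> H \<noteq> carrier G \<and> \<not> abelian_set G H}"

definition maximal_subgroup :: "'a set \<Rightarrow> ('a, 'b) monoid_scheme \<Rightarrow> bool" where
  "maximal_subgroup M G \<longleftrightarrow> subgroup M G \<and> M \<noteq> carrier G \<and>
     (\<forall>H. subgroup H G \<and> M \<subseteq> H \<longrightarrow> H = M \<or> H = carrier G)"

definition type_B :: "('a, 'b) monoid_scheme \<Rightarrow> bool" where
  "type_B G \<longleftrightarrow> exponent_critical G \<and>
     (\<exists>M1 M2. M1 \<noteq> M2 \<and> maximal_subgroup M1 G \<and> maximal_subgroup M2 G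
        \<and> abelian_set G M1 \<and> abelian_set G M2)"

definition two_generated :: "('a, 'b) monoid_scheme \<Rightarrow> bool" where
  "two_generated G \<longleftrightarrow> (\<exists>a\<in>carrier G. \<exists>b\<in>carrier G. generate G {a, b} = carrier G)"

end

(*
  If P is of type B, two distinct abelian maximal subgroups intersect in the centre. Maximal
  subgroups of a p-group are normal of index p, so they contain all commutators and p-th powers;
  hence P has class at most two, and for generators a, b (which exist by exponent-criticality)
  P' is generated by [a, b], whose p-th power [a^p, b] is trivial, so |P'| = p.

  Conversely, if P = <a, b> and |P'| = p, then P' is central, and writing x = a^i b^j and
  y = a^r b^s modulo P' gives [x, y] = [a, b]^(is - jr). A non-abelian subgroup H then contains
  P' and, inverting this determinant modulo p, also a and b. So all proper subgroups are abelian,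
  which makes P exponent-critical, with the centralizers of a and b as abelian maximal subgroups.
*)
theory Submission
  imports Defs
begin

section \<open>Commutators and the centre\<close>

definition commutator :: "('a, 'b) monoid_scheme \<Rightarrow> 'a \<Rightarrow> 'a \<Rightarrow> 'a" where
  "commutator G x y = x \<otimes>\<^bsub>G\<^esub> y \<otimes>\<^bsub>G\<^esub> inv\<^bsub>G\<^esub> x \<otimes>\<^bsub>G\<^esub> inv\<^bsub>G\<^esub> y"

definition centralizer :: "('a, 'b) monoid_scheme \<Rightarrow> 'a \<Rightarrow> 'a set" where
  "centralizer G a = {g \<in> carrier G. g \<otimes>\<^bsub>G\<^esub> a = a \<otimes>\<^bsub>G\<^esub> g}"

definition center :: "('a, 'b) monoid_scheme \<Rightarrow> 'a set" where
  "center G = {z \<in> carrier G. \<forall>g\<in>carrier G. z \<otimes>\<^bsub>G\<^esub> g = g \<otimes>\<^bsub>G\<^esub> z}"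

context group
begin

lemma inv_mult_cancel [simp]: "x \<in> carrier G \<Longrightarrow> y \<in> carrier G \<Longrightarrow> inv x \<otimes> (x \<otimes> y) = y"
  by (simp flip: m_assoc)

lemma mult_inv_cancel [simp]: "x \<in> carrier G \<Longrightarrow> y \<in> carrier G \<Longrightarrow> x \<otimes> (inv x \<otimes> y) = y"
  by (simp flip: m_assoc)

lemma commutator_closed [simp]:
  "x \<in> carrier G \<Longrightarrow> y \<in> carrier G \<Longrightarrow> commutator G x y \<in> carrier G"
  by (simp add: commutator_def)

lemma commutator_mult_swap:
  "x \<in> carrier G \<Longrightarrow> y \<in> carrier G \<Longrightarrow> commutator G x y \<otimes> (y \<otimes> x) = x \<otimes> y"
  by (simp add: commutator_def m_assoc)

lemma commutator_unique:
  assumes "x \<in> carrier G" "y \<in> carrier G" "c \<in> carrier G" and "c \<otimes> (y \<otimes> x) = x \<otimes> y"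
  shows "c = commutator G x y"
  by (metis assms commutator_closed commutator_mult_swap m_closed right_cancel)

lemma commutator_eq_one_iff:
  "x \<in> carrier G \<Longrightarrow> y \<in> carrier G \<Longrightarrow> commutator G x y = \<one> \<longleftrightarrow> x \<otimes> y = y \<otimes> x"
  using commutator_mult_swap[of x y] commutator_unique[of x y \<one>] by auto

lemma inv_commutator:
  "x \<in> carrier G \<Longrightarrow> y \<in> carrier G \<Longrightarrow> inv (commutator G x y) = commutator G y x"
  by (simp add: commutator_def inv_mult_group m_assoc)

lemma commutator_in_derived:
  "x \<in> carrier G \<Longrightarrow> y \<in> carrier G \<Longrightarrow> commutator G x y \<in> derived G (carrier G)"
  unfolding derived_def commutator_def by (rule generate.incl) blast

lemma centralizer_subgroup:
  assumes a: "a \<in> carrier G"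
  shows "subgroup (centralizer G a) G"
proof (rule subgroupI)
  fix g h
  assume "g \<in> centralizer G a" and "h \<in> centralizer G a"
  then have g: "g \<in> carrier G" "g \<otimes> a = a \<otimes> g" and h: "h \<in> carrier G" "h \<otimes> a = a \<otimes> h"
    by (auto simp: centralizer_def)
  have "inv g \<otimes> a = inv g \<otimes> (a \<otimes> g) \<otimes> inv g"
    using a g by (simp add: m_assoc)
  also have "\<dots> = a \<otimes> inv g"
    using a g by (simp flip: g(2) add: m_assoc)
  finally show "inv g \<in> centralizer G a"
    using g by (simp add: centralizer_def)
  have "g \<otimes> h \<otimes> a = a \<otimes> (g \<otimes> h)"
    using a g h by (simp add: m_assoc h(2)) (simp flip: m_assoc add: g(2))
  then show "g \<otimes> h \<in> centralizer G a"
    using g h by (simp add: centralizer_def)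
qed (use a in \<open>auto simp: centralizer_def\<close>)

lemma center_carrier: "z \<in> center G \<Longrightarrow> z \<in> carrier G"
  unfolding center_def by blast

lemma center_commute: "z \<in> center G \<Longrightarrow> g \<in> carrier G \<Longrightarrow> z \<otimes> g = g \<otimes> z"
  unfolding center_def by blast

lemma center_eq_Inter_centralizer: "center G = (\<Inter>g\<in>carrier G. centralizer G g)"
  using one_closed unfolding center_def centralizer_def by blast

lemma center_subgroup: "subgroup (center G) G"
  unfolding center_eq_Inter_centralizer
  by (rule subgroups_Inter) (auto simp: centralizer_subgroup)

lemma center_left_commute:
  assumes "z \<in> center G" "x \<in> carrier G" "y \<in> carrier G"
  shows "x \<otimes> (z \<otimes> y) = z \<otimes> (x \<otimes> y)"
  using assms center_carrier[OF assms(1)] center_commute[OF assms(1,2)] by (simp flip: m_assoc)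

lemma commutator_center_left: "z \<in> center G \<Longrightarrow> y \<in> carrier G \<Longrightarrow> commutator G z y = \<one>"
  by (meson center_carrier center_commute commutator_eq_one_iff)

lemma commutator_center_right: "z \<in> center G \<Longrightarrow> x \<in> carrier G \<Longrightarrow> commutator G x z = \<one>"
  by (metis center_carrier center_commute commutator_eq_one_iff)

end

section \<open>Groups of class at most two\<close>

locale class_le_two_group = group +
  assumes commutator_in_center:
    "x \<in> carrier G \<Longrightarrow> y \<in> carrier G \<Longrightarrow> commutator G x y \<in> center G"
begin

lemma commutator_mult_left:
  assumes x: "x \<in> carrier G" and y: "y \<in> carrier G" and z: "z \<in> carrier G"
  shows "commutator G (x \<otimes> y) z = commutator G x z \<otimes> commutator G y z"
proof (rule sym, rule commutator_unique)
  define c d where "c = commutator G y z" and "d = commutator G x z"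
  have c: "c \<in> center G" "c \<in> carrier G" and d: "d \<in> carrier G"
    using x y z commutator_in_center[OF y z] by (auto simp: c_def d_def)
  have "x \<otimes> y \<otimes> z = x \<otimes> (c \<otimes> (z \<otimes> y))"
    using x y z by (simp add: m_assoc commutator_mult_swap c_def)
  also have "\<dots> = c \<otimes> (x \<otimes> z \<otimes> y)"
    using x y z c by (simp add: center_left_commute[OF c(1) x] m_assoc)
  also have "x \<otimes> z = d \<otimes> (z \<otimes> x)"
    using x z by (simp add: commutator_mult_swap d_def)
  also have "c \<otimes> (d \<otimes> (z \<otimes> x) \<otimes> y) = d \<otimes> c \<otimes> (z \<otimes> (x \<otimes> y))"
    using x y z c d by (simp add: center_commute[OF c(1) d, symmetric] flip: m_assoc)
  finally show "commutator G x z \<otimes> commutator G y z \<otimes> (z \<otimes> (x \<otimes> y)) = x \<otimes> y \<otimes> z"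
    by (simp add: c_def d_def)
qed (use x y z in auto)

lemma commutator_mult_right:
  assumes x: "x \<in> carrier G" and y: "y \<in> carrier G" and z: "z \<in> carrier G"
  shows "commutator G x (y \<otimes> z) = commutator G x y \<otimes> commutator G x z"
proof -
  have "commutator G x (y \<otimes> z) = inv (commutator G (y \<otimes> z) x)"
    using x y z by (simp add: inv_commutator)
  also have "\<dots> = inv (commutator G y x \<otimes> commutator G z x)"
    using x y z by (simp add: commutator_mult_left)
  also have "\<dots> = commutator G x z \<otimes> commutator G x y"
    using x y z by (simp add: inv_mult_group inv_commutator)
  also have "\<dots> = commutator G x y \<otimes> commutator G x z"
    using x y z commutator_in_center[OF x y] by (simp add: center_commute[of "commutator G x y"])
  finally show ?thesis .
qed

lemma commutator_int_pow_left:
  assumes "x \<in> carrier G" "y \<in> carrier G"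
  shows "commutator G (x [^] (k::int)) y = commutator G x y [^] k"
proof -
  have "(\<lambda>x. commutator G x y) \<in> hom G G"
    using assms by (intro homI) (auto simp: commutator_mult_left)
  then show ?thesis
    using assms hom_int_pow[of "\<lambda>x. commutator G x y" G G x k] is_group by simp
qed

lemma commutator_int_pow_right:
  assumes "x \<in> carrier G" "y \<in> carrier G"
  shows "commutator G x (y [^] (k::int)) = commutator G x y [^] k"
proof -
  have "(\<lambda>y. commutator G x y) \<in> hom G G"
    using assms by (intro homI) (auto simp: commutator_mult_right)
  then show ?thesis
    using assms hom_int_pow[of "\<lambda>y. commutator G x y" G G y k] is_group by simp
qed

lemma commutator_int_pow_int_pow:
  assumes "x \<in> carrier G" "y \<in> carrier G"
  shows "commutator G (x [^] (i::int)) (y [^] (j::int)) = commutator G x y [^] (i * j)"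
  using assms by (simp add: commutator_int_pow_left commutator_int_pow_right int_pow_pow mult.commute)

lemma derived_subset_center: "derived G (carrier G) \<subseteq> center G"
  unfolding derived_def
  by (rule generate_subgroup_incl[OF _ center_subgroup])
     (auto simp: commutator_in_center[unfolded commutator_def])

lemma derived_in_center:
  assumes "w \<in> derived G (carrier G)"
  shows "w \<in> center G" "w \<in> carrier G"
  using assms derived_subset_center center_carrier by blast+

end

locale two_generated_class_le_two_group = class_le_two_group +
  fixes a b
  assumes a: "a \<in> carrier G" and b: "b \<in> carrier G"
    and generate_ab: "generate G {a, b} = carrier G"
begin

(* Coordinates modulo the derived subgroup; they need not be unique. *)
definition coords :: "'a \<Rightarrow> int \<Rightarrow> int \<Rightarrow> bool" where
  "coords g i j \<longleftrightarrow> (\<exists>w\<in>derived G (carrier G). g = a [^] i \<otimes> b [^] j \<otimes> w)"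

lemma coordsI: "w \<in> derived G (carrier G) \<Longrightarrow> g = a [^] i \<otimes> b [^] j \<otimes> w \<Longrightarrow> coords g i j"
  unfolding coords_def by blast

lemma coords_carrier: "coords g i j \<Longrightarrow> g \<in> carrier G"
  unfolding coords_def using a b derived_in_center(2) by auto

lemma coords_one_generators: "coords \<one> 0 0" "coords a 1 0" "coords b 0 1"
  using a b subgroup.one_closed[OF derived_is_subgroup[of "carrier G"]]
  by (auto intro!: coordsI[of \<one>])

lemma coords_mult:
  assumes "coords g i j" "coords h r s"
  shows "coords (g \<otimes> h) (i + r) (j + s)"
proof -
  obtain w w' where w: "w \<in> derived G (carrier G)" "g = a [^] i \<otimes> b [^] j \<otimes> w"
    and w': "w' \<in> derived G (carrier G)" "h = a [^] r \<otimes> b [^] s \<otimes> w'"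
    using assms unfolding coords_def by blast
  define c where "c = commutator G (b [^] j) (a [^] r)"
  have c: "c \<in> derived G (carrier G)"
    unfolding c_def using a b by (simp add: commutator_in_derived)
  note central = derived_in_center(1)[OF w(1)] derived_in_center(1)[OF c]
  note carr = a b derived_in_center(2)[OF w(1)] derived_in_center(2)[OF w'(1)] derived_in_center(2)[OF c]
  have "g \<otimes> h = a [^] i \<otimes> (b [^] j \<otimes> a [^] r) \<otimes> b [^] s \<otimes> (w \<otimes> w')"
    using carr w w' by (simp add: m_assoc center_left_commute[OF central(1), symmetric])
  also have "b [^] j \<otimes> a [^] r = c \<otimes> (a [^] r \<otimes> b [^] j)"
    unfolding c_def using a b by (simp add: commutator_mult_swap)
  also have "a [^] i \<otimes> (c \<otimes> (a [^] r \<otimes> b [^] j)) \<otimes> b [^] s \<otimes> (w \<otimes> w')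
      = (a [^] i \<otimes> a [^] r) \<otimes> (b [^] j \<otimes> b [^] s) \<otimes> (c \<otimes> w \<otimes> w')"
    using carr by (simp add: m_assoc center_left_commute[OF central(2), symmetric])
  also have "\<dots> = a [^] (i + r) \<otimes> b [^] (j + s) \<otimes> (c \<otimes> w \<otimes> w')"
    using a b by (simp add: int_pow_mult)
  finally show ?thesis
    using c w(1) w'(1) derived_is_subgroup[of "carrier G"]
    by (intro coordsI[of "c \<otimes> w \<otimes> w'"]) (auto intro: subgroup.m_closed)
qed

lemma coords_inv:
  assumes "coords g i j"
  shows "coords (inv g) (- i) (- j)"
proof -
  obtain w where w: "w \<in> derived G (carrier G)" "g = a [^] i \<otimes> b [^] j \<otimes> w"
    using assms unfolding coords_def by blast
  define c where "c = commutator G (inv (b [^] j)) (inv (a [^] i))"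
  have c: "c \<in> derived G (carrier G)"
    unfolding c_def using a b by (simp add: commutator_in_derived)
  note carr = a b derived_in_center(2)[OF w(1)] derived_in_center(2)[OF c]
  have "inv g = inv w \<otimes> (inv (b [^] j) \<otimes> inv (a [^] i))"
    using carr w by (simp add: inv_mult_group m_assoc)
  also have "inv (b [^] j) \<otimes> inv (a [^] i) = c \<otimes> (inv (a [^] i) \<otimes> inv (b [^] j))"
    unfolding c_def using a b by (simp add: commutator_mult_swap)
  also have "inv w \<otimes> (c \<otimes> (inv (a [^] i) \<otimes> inv (b [^] j)))
      = c \<otimes> inv w \<otimes> (inv (a [^] i) \<otimes> inv (b [^] j))"
    using carr by (simp add: center_commute[OF derived_in_center(1)[OF c], of "inv w"] flip: m_assoc)
  also have "\<dots> = a [^] (- i) \<otimes> b [^] (- j) \<otimes> (c \<otimes> inv w)"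
  proof -
    have "c \<otimes> inv w \<in> center G"
      using center_subgroup derived_in_center[OF c] derived_in_center[OF w(1)]
      by (blast intro: subgroup.m_closed subgroup.m_inv_closed)
    from center_commute[OF this, of "inv (a [^] i) \<otimes> inv (b [^] j)"] show ?thesis
      using carr by (simp add: int_pow_neg)
  qed
  finally show ?thesis
    using c w(1) derived_is_subgroup[of "carrier G"]
    by (intro coordsI[of "c \<otimes> inv w"]) (auto intro: subgroup.m_closed subgroup.m_inv_closed)
qed

lemma coords_nat_pow: "coords g i j \<Longrightarrow> coords (g [^] (k::nat)) (int k * i) (int k * j)"
proof (induction k)
  case 0
  show ?case
    using coords_one_generators(1) by simp
next
  case (Suc k)
  then show ?case
    using coords_mult[OF Suc.IH Suc.prems] by (simp add: algebra_simps)
qed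

lemma coords_int_pow:
  assumes "coords g i j"
  shows "coords (g [^] (k::int)) (k * i) (k * j)"
proof (cases k rule: int_cases)
  case (nonneg m)
  then show ?thesis
    using coords_nat_pow[OF assms, of m] by (simp add: int_pow_int)
next
  case (neg m)
  then have "k = - int (Suc m)"
    by simp
  then show ?thesis
    using coords_inv[OF coords_nat_pow[OF assms, of "Suc m"]] coords_carrier[OF assms]
    by (simp add: int_pow_neg_int del: of_nat_Suc)
qed

lemma coords_exists:
  assumes "g \<in> carrier G"
  obtains i j where "coords g i j"
proof -
  have "g \<in> generate G {a, b}"
    using assms generate_ab by simp
  then have "\<exists>i j. coords g i j"
  proof (induction rule: generate.induct)
    case one
    show ?case
      using coords_one_generators by blast
  next
    case (incl h)
    then show ?case
      using coords_one_generators by blast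
  next
    case (inv h)
    then show ?case
      using coords_one_generators by (blast intro: coords_inv)
  next
    case (eng h1 h2)
    then show ?case
      by (blast intro: coords_mult)
  qed
  then show ?thesis
    using that by blast
qed

lemma commutator_coords:
  assumes "coords x i j" "coords y r s"
  shows "commutator G x y = commutator G a b [^] (i * s - j * r)"
proof -
  obtain w w' where w: "w \<in> derived G (carrier G)" "x = a [^] i \<otimes> b [^] j \<otimes> w"
    and w': "w' \<in> derived G (carrier G)" "y = a [^] r \<otimes> b [^] s \<otimes> w'"
    using assms unfolding coords_def by blast
  note carr = a b derived_in_center(2)[OF w(1)] derived_in_center(2)[OF w'(1)]
  have same: "commutator G (u [^] k) (u [^] l) = \<one>" if "u \<in> carrier G" for u and k l :: int
    using that commutator_eq_one_iff[of u u] by (simp add: commutator_int_pow_int_pow)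
  have "commutator G x y
      = commutator G (a [^] i) (a [^] r) \<otimes> commutator G (b [^] j) (a [^] r)
        \<otimes> (commutator G (a [^] i) (b [^] s) \<otimes> commutator G (b [^] j) (b [^] s))"
    using carr w w' derived_in_center[OF w(1)] derived_in_center[OF w'(1)]
    by (simp add: commutator_mult_left commutator_mult_right commutator_center_left
        commutator_center_right)
  also have "\<dots> = commutator G a b [^] (- (j * r)) \<otimes> commutator G a b [^] (i * s)"
    using a b
    by (simp add: same commutator_int_pow_int_pow int_pow_neg int_pow_inv
        flip: inv_commutator[of a b])
  also have "\<dots> = commutator G a b [^] (i * s - j * r)"
    using a b by (simp add: int_pow_mult[symmetric])
  finally show ?thesis .
qed

lemma commutator_in_generate_commutator:
  assumes "x \<in> carrier G" "y \<in> carrier G"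
  shows "commutator G x y \<in> generate G {commutator G a b}"
proof -
  obtain i j r s where "coords x i j" "coords y r s"
    using coords_exists assms by metis
  then show ?thesis
    using a b by (auto simp: commutator_coords generate_pow)
qed

lemma derived_eq_generate_commutator: "derived G (carrier G) = generate G {commutator G a b}"
proof
  show "generate G {commutator G a b} \<subseteq> derived G (carrier G)"
    using a b by (intro generate_subgroup_incl) (auto simp: commutator_in_derived derived_is_subgroup)
  have "derived_set G (carrier G) \<subseteq> generate G {commutator G a b}"
    using commutator_in_generate_commutator by (auto simp: commutator_def)
  then show "derived G (carrier G) \<subseteq> generate G {commutator G a b}"
    unfolding derived_def using a b by (intro generate_subgroup_incl generate_is_subgroup) auto
qed

lemma abelian_if_commutator_eq_one:
  assumes "commutator G a b = \<one>"
  shows "abelian_set G (carrier G)"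
  unfolding abelian_set_def
proof (intro ballI)
  fix x y
  assume xy: "x \<in> carrier G" "y \<in> carrier G"
  obtain i j r s where "coords x i j" "coords y r s"
    using coords_exists xy by metis
  then have "commutator G x y = \<one>"
    using assms by (simp add: commutator_coords)
  then show "x \<otimes> y = y \<otimes> x"
    using xy commutator_eq_one_iff by blast
qed

end

section \<open>Orbits of actions of p-groups\<close>

lemma (in group_action) prime_dvd_card_orbit:
  assumes p: "Factorial_Ring.prime p" and card_G: "card (carrier G) = p ^ k"
    and x: "x \<in> E" and moved: "\<exists>g\<in>carrier G. \<phi> g x \<noteq> x"
  shows "p dvd card (orbit G \<phi> x)"
proof -
  have "card (orbit G \<phi> x) dvd p ^ k"
    using orbit_stabilizer_theorem[OF x] card_G unfolding order_def by (metis dvd_triv_left)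
  then obtain i where i: "card (orbit G \<phi> x) = p ^ i"
    using divides_primepow_nat[OF p] by blast
  have "card (orbit G \<phi> x) \<noteq> 1"
  proof
    assume "card (orbit G \<phi> x) = 1"
    then have "orbit G \<phi> x = {x}"
      using orbit_refl[OF x] by (metis card_1_singletonE singletonD)
    with moved show False
      unfolding orbit_def by blast
  qed
  with i show ?thesis
    by (cases i) auto
qed

lemma (in group_action) card_fixed_points_mod_prime:
  assumes p: "Factorial_Ring.prime p" and card_G: "card (carrier G) = p ^ k"
    and S: "finite S" "S \<subseteq> E" and invariant: "\<And>g x. g \<in> carrier G \<Longrightarrow> x \<in> S \<Longrightarrow> \<phi> g x \<in> S"
  shows "card S mod p = card {x \<in> S. \<forall>g\<in>carrier G. \<phi> g x = x} mod p"
proof -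
  define F where "F = {x \<in> S. \<forall>g\<in>carrier G. \<phi> g x = x}"
  have orbit_nonfixed: "orbit G \<phi> x \<subseteq> S - F" if x: "x \<in> S - F" for x
  proof
    fix y
    assume y: "y \<in> orbit G \<phi> x"
    then have "y \<in> S"
      using x invariant unfolding orbit_def by blast
    moreover have "x \<in> orbit G \<phi> y"
      using orbit_sym[of x y] x y \<open>y \<in> S\<close> S(2) by blast
    then have "y \<notin> F"
      using x unfolding F_def orbit_def by force
    ultimately show "y \<in> S - F"
      by blast
  qed
  have union: "\<Union>(orbit G \<phi> ` (S - F)) = S - F"
    using orbit_nonfixed orbit_refl S(2) by blast
  have "p dvd card (\<Union>(orbit G \<phi> ` (S - F)))"
  proof (rule dvd_partition)
    show "finite (\<Union>(orbit G \<phi> ` (S - F)))"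
      unfolding union using S(1) by blast
    show "\<forall>c\<in>orbit G \<phi> ` (S - F). p dvd card c"
      using prime_dvd_card_orbit[OF p card_G] S(2) unfolding F_def by blast
    have "orbit G \<phi> x \<in> orbits G E \<phi>" if "x \<in> S" for x
      using that S(2) unfolding orbits_def by blast
    then show "\<forall>c1\<in>orbit G \<phi> ` (S - F). \<forall>c2\<in>orbit G \<phi> ` (S - F). c1 \<noteq> c2 \<longrightarrow> c1 \<inter> c2 = {}"
      using disjoint_union by blast
  qed
  then have "p dvd card (S - F)"
    unfolding union .
  moreover have "card S = card F + card (S - F)"
    using S(1) by (simp add: F_def card_Diff_subset card_mono)
  ultimately show ?thesis
    unfolding F_def[symmetric] by (auto elim!: dvdE)
qed

section \<open>Conjugation of subsets\<close>

definition subset_conjugation :: "('a, 'b) monoid_scheme \<Rightarrow> 'a \<Rightarrow> 'a set \<Rightarrow> 'a set" where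
  "subset_conjugation G g = (\<lambda>K \<in> {K. K \<subseteq> carrier G}. g <#\<^bsub>G\<^esub> K #>\<^bsub>G\<^esub> inv\<^bsub>G\<^esub> g)"

context group
begin

lemma subset_conjugation_action:
  "group_action G {K. K \<subseteq> carrier G} (subset_conjugation G)"
  unfolding subset_conjugation_def by (rule action_by_conjugation_on_power_set)

lemma normalizer_eq_stabilizer: "normalizer G H = stabilizer G (subset_conjugation G) H"
  unfolding normalizer_def subset_conjugation_def ..

lemma subset_conjugation_eq_image:
  "K \<subseteq> carrier G \<Longrightarrow> g \<in> carrier G \<Longrightarrow> subset_conjugation G g K = (\<lambda>k. g \<otimes> k \<otimes> inv g) ` K"
  unfolding subset_conjugation_def l_coset_def r_coset_def by auto

lemma card_subset_conjugation:
  assumes K: "K \<subseteq> carrier G" and g: "g \<in> carrier G"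
  shows "card (subset_conjugation G g K) = card K"
proof -
  have "inj_on (\<lambda>k. g \<otimes> k \<otimes> inv g) K"
  proof (rule inj_onI)
    fix x y
    assume x: "x \<in> K" and y: "y \<in> K" and eq: "g \<otimes> x \<otimes> inv g = g \<otimes> y \<otimes> inv g"
    have undo: "inv g \<otimes> (g \<otimes> k \<otimes> inv g) \<otimes> g = k" if "k \<in> K" for k
      using that K g by (auto simp: m_assoc)
    show "x = y"
      using undo[OF x] undo[OF y] eq by metis
  qed
  then show ?thesis
    using K g by (simp add: subset_conjugation_eq_image card_image)
qed

lemma fixed_conjugate_eq_if_self_normalizing:
  assumes H: "subgroup H G" "finite H" and self_normalizing: "normalizer G H = H"
    and y: "y \<in> carrier G"
    and fixed: "\<And>h. h \<in> H \<Longrightarrow>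
      subset_conjugation G h (subset_conjugation G y H) = subset_conjugation G y H"
  shows "subset_conjugation G y H = H"
proof -
  interpret conj: group_action G "{K. K \<subseteq> carrier G}" "subset_conjugation G"
    by (rule subset_conjugation_action)
  have H_carrier: "H \<subseteq> carrier G"
    using subgroup.subset[OF H(1)] .
  then have H_E: "H \<in> {K. K \<subseteq> carrier G}"
    by simp
  have conjugate_back: "inv y \<otimes> h \<otimes> y \<in> H" if h: "h \<in> H" for h
  proof -
    have "subset_conjugation G (inv y \<otimes> h \<otimes> y) H
        = subset_conjugation G (inv y) (subset_conjugation G h (subset_conjugation G y H))"
      using h H_carrier y conj.composition_rule[OF H_E, of "inv y \<otimes> h" y]
        conj.composition_rule[OF conj.element_image[OF y H_E refl], of "inv y" h]
      by auto
    also have "\<dots> = subset_conjugation G (inv y) (subset_conjugation G y H)"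
      using fixed[OF h] by simp
    also have "\<dots> = H"
      using y H_E by (simp add: conj.composition_rule[OF H_E, symmetric] flip: conj.id_eq_one)
    finally have "inv y \<otimes> h \<otimes> y \<in> stabilizer G (subset_conjugation G) H"
      using h H_carrier y unfolding stabilizer_def by blast
    then show ?thesis
      using self_normalizing unfolding normalizer_eq_stabilizer by simp
  qed
  have "H \<subseteq> subset_conjugation G y H"
  proof
    fix h
    assume h: "h \<in> H"
    then have "h = y \<otimes> (inv y \<otimes> h \<otimes> y) \<otimes> inv y"
      using H_carrier y by (auto simp: m_assoc)
    then show "h \<in> subset_conjugation G y H"
      using conjugate_back[OF h] y H_carrier by (auto simp: subset_conjugation_eq_image)
  qed
  moreover have "card (subset_conjugation G y H) = card H"
    using y H_carrier by (simp add: card_subset_conjugation)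
  moreover have "finite (subset_conjugation G y H)"
    using y H_carrier H(2) by (simp add: subset_conjugation_eq_image)
  ultimately show ?thesis
    using card_subset_eq by metis
qed

lemma subset_normalizer:
  assumes "subgroup H G"
  shows "H \<subseteq> normalizer G H"
proof -
  have "subgroup H (G\<lparr>carrier := normalizer G H\<rparr>)"
    using normal_imp_subgroup[OF subgroup_in_normalizer[OF assms]] .
  from subgroup.subset[OF this] show ?thesis
    by simp
qed

end

section \<open>Maximal subgroups and exponent-critical groups\<close>

context group
begin

lemma mem_of_coprime_int_pow_mem:
  assumes K: "subgroup K G" and g: "g \<in> carrier G" and pow: "g [^] (d::int) \<in> K"
    and coprime: "coprime d (int (ord g))"
  shows "g \<in> K"
proof -
  obtain u v where "u * d + v * int (ord g) = 1"
    using bezout_int[of d "int (ord g)"] coprime by auto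
  then have "g = g [^] (u * d + v * int (ord g))"
    using g by simp
  also have "\<dots> = (g [^] d) [^] u \<otimes> g [^] (v * int (ord g))"
    using g by (simp add: int_pow_mult int_pow_pow mult.commute)
  also have "\<dots> = (g [^] d) [^] u"
    using g by (simp add: int_pow_eq_id)
  finally show ?thesis
    using subgroup_int_pow_closed[OF K pow] by metis
qed

lemma maximal_normal_subgroup_mult_int_pow:
  assumes M: "maximal_subgroup M G" "M \<lhd> G" and g: "g \<in> carrier G" "g \<notin> M"
    and x: "x \<in> carrier G"
  obtains m k where "m \<in> M" "x = m \<otimes> g [^] (k::int)"
proof -
  have M_sub: "subgroup M G" and maximal: "\<And>H. subgroup H G \<Longrightarrow> M \<subseteq> H \<Longrightarrow> H = M \<or> H = carrier G"
    using M(1) unfolding maximal_subgroup_def by auto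
  define H where "H = M <#> generate G {g}"
  have H_sub: "subgroup H G"
    unfolding H_def using g by (intro mult_norm_subgroup[OF M(2)] generate_is_subgroup) auto
  have one_gen: "\<one> \<in> generate G {g}"
    by (rule generate.one)
  have "M \<subseteq> H"
    unfolding H_def set_mult_def using one_gen subgroup.subset[OF M_sub] by force
  moreover have "g \<in> H"
    unfolding H_def set_mult_def using subgroup.one_closed[OF M_sub] generate.incl[of g "{g}" G] g
    by force
  ultimately have "H = carrier G"
    using maximal[OF H_sub] g(2) by blast
  then show ?thesis
    using x that unfolding H_def set_mult_def generate_pow[OF g(1)] by blast
qed

lemma commutator_in_maximal_normal_subgroup:
  assumes M: "maximal_subgroup M G" "M \<lhd> G" and x: "x \<in> carrier G" and y: "y \<in> carrier G"
  shows "commutator G x y \<in> M"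
proof (cases "y \<in> M")
  case True
  then show ?thesis
    using normal.inv_op_closed2[OF M(2) x True] M(2) x y unfolding commutator_def
    by (metis normal_imp_subgroup subgroup.m_closed subgroup.m_inv_closed)
next
  case False
  then obtain m k where m: "m \<in> M" and x_eq: "x = m \<otimes> y [^] (k::int)"
    using maximal_normal_subgroup_mult_int_pow[OF M y _ x] by blast
  have mc: "m \<in> carrier G"
    using m M(2) normal_imp_subgroup subgroup.subset by blast
  have "y [^] k \<otimes> y = y \<otimes> y [^] k"
    using y by (metis int_pow_1 int_pow_mult add.commute)
  then have "commutator G x y = m \<otimes> (y \<otimes> inv m \<otimes> inv y)"
    unfolding commutator_def x_eq using mc y by (simp add: m_assoc inv_mult_group)
  moreover have "y \<otimes> inv m \<otimes> inv y \<in> M"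
    using normal.inv_op_closed2[OF M(2) y] m M(2) by (simp add: normal_imp_subgroup subgroup.m_inv_closed)
  ultimately show ?thesis
    using m M(2) by (metis normal_imp_subgroup subgroup.m_closed)
qed

lemma ord_mult_dvd_lcm:
  assumes "x \<in> carrier G" "y \<in> carrier G" "x \<otimes> y = y \<otimes> x"
  shows "ord (x \<otimes> y) dvd lcm (ord x) (ord y)"
proof -
  have "(x \<otimes> y) [^] lcm (ord x) (ord y) = x [^] lcm (ord x) (ord y) \<otimes> y [^] lcm (ord x) (ord y)"
    using pow_mult_distrib[OF assms(3,1,2)] .
  also have "\<dots> = \<one>"
  proof -
    have "x [^] lcm (ord x) (ord y) = \<one>" "y [^] lcm (ord x) (ord y) = \<one>"
      using assms by (simp_all add: pow_eq_id)
    then show ?thesis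
      by simp
  qed
  finally show ?thesis
    using assms by (simp add: pow_eq_id)
qed

lemma exponent_critical_iff:
  "exponent_critical G \<longleftrightarrow>
     \<not> grp_exp G (carrier G) dvd
       Lcm {grp_exp G H | H. subgroup H G \<and> H \<noteq> carrier G \<and> \<not> abelian_set G H}"
proof -
  have "Lcm {grp_exp G H | H. subgroup H G \<and> H \<noteq> carrier G \<and> \<not> abelian_set G H}
      dvd grp_exp G (carrier G)"
  proof (rule Lcm_least)
    fix k
    assume "k \<in> {grp_exp G H | H. subgroup H G \<and> H \<noteq> carrier G \<and> \<not> abelian_set G H}"
    then obtain H where H: "subgroup H G" and k: "k = grp_exp G H"
      by blast
    show "k dvd grp_exp G (carrier G)"
      unfolding k grp_exp_def using H by (intro Lcm_subset image_mono subgroup.subset)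
  qed
  then show ?thesis
    unfolding exponent_critical_def by (auto intro: dvd_antisym)
qed

lemma ord_dvd_Lcm_exponents_if_not_two_generated:
  assumes not_two_generated: "\<not> two_generated G"
    and g: "g \<in> carrier G" and h: "h \<in> carrier G" and gh: "g \<otimes> h \<noteq> h \<otimes> g"
  shows "ord g dvd Lcm {grp_exp G H | H. subgroup H G \<and> H \<noteq> carrier G \<and> \<not> abelian_set G H}"
proof -
  define H where "H = generate G {g, h}"
  have H_sub: "subgroup H G"
    unfolding H_def using g h by (intro generate_is_subgroup) auto
  have H_proper: "H \<noteq> carrier G"
    using g h not_two_generated unfolding H_def two_generated_def by blast
  have gH: "g \<in> H" "h \<in> H"
    unfolding H_def by (auto intro: generate.incl)
  then have "\<not> abelian_set G H"
    using gh unfolding abelian_set_def by blast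
  then have "grp_exp G H dvd Lcm {grp_exp G H | H. subgroup H G \<and> H \<noteq> carrier G \<and> \<not> abelian_set G H}"
    using H_sub H_proper by (intro dvd_Lcm) blast
  moreover have "ord g dvd grp_exp G H"
    unfolding grp_exp_def using gH(1) by (intro dvd_Lcm) blast
  ultimately show ?thesis
    by (rule dvd_trans[rotated])
qed

lemma two_generated_if_exponent_critical:
  assumes critical: "exponent_critical G" and nonabelian: "\<not> abelian_set G (carrier G)"
  shows "two_generated G"
proof (rule ccontr)
  assume not_two_generated: "\<not> two_generated G"
  define L where "L = Lcm {grp_exp G H | H. subgroup H G \<and> H \<noteq> carrier G \<and> \<not> abelian_set G H}"
  note ord_noncentral = ord_dvd_Lcm_exponents_if_not_two_generated[OF not_two_generated, folded L_def]
  obtain x y where x: "x \<in> carrier G" and y: "y \<in> carrier G" and xy: "x \<otimes> y \<noteq> y \<otimes> x"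
    using nonabelian unfolding abelian_set_def by blast
  have "ord g dvd L" if g: "g \<in> carrier G" for g
  proof (cases "\<forall>h\<in>carrier G. g \<otimes> h = h \<otimes> g")
    case True
    (* g is the product of the commuting non-central elements x^-1 and x g *)
    have "x \<otimes> g \<otimes> y \<noteq> y \<otimes> (x \<otimes> g)"
    proof
      assume "x \<otimes> g \<otimes> y = y \<otimes> (x \<otimes> g)"
      moreover have "x \<otimes> g \<otimes> y = x \<otimes> y \<otimes> g" "y \<otimes> (x \<otimes> g) = y \<otimes> x \<otimes> g"
        using True x y g by (simp_all add: m_assoc)
      ultimately show False
        using xy x y g by simp
    qed
    then have "lcm (ord (inv x)) (ord (x \<otimes> g)) dvd L"
      using ord_noncentral[OF x y xy] ord_noncentral[of "x \<otimes> g" y] x y g by simp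
    moreover have "inv x \<otimes> (x \<otimes> g) = x \<otimes> g \<otimes> inv x"
      using True x g by (simp add: m_assoc)
    ultimately show ?thesis
      using ord_mult_dvd_lcm[of "inv x" "x \<otimes> g"] x g by (simp add: dvd_trans)
  next
    case False
    then show ?thesis
      using ord_noncentral g by blast
  qed
  then have "grp_exp G (carrier G) dvd L"
    unfolding grp_exp_def by (intro Lcm_least) blast
  with critical show False
    unfolding exponent_critical_iff L_def by blast
qed

lemma exponent_critical_if_proper_subgroups_abelian:
  assumes nonabelian: "\<not> abelian_set G (carrier G)"
    and proper_abelian: "\<And>H. subgroup H G \<Longrightarrow> H \<noteq> carrier G \<Longrightarrow> abelian_set G H"
  shows "exponent_critical G"
proof -
  have no_exponents:
    "{grp_exp G H | H. subgroup H G \<and> H \<noteq> carrier G \<and> \<not> abelian_set G H} = {}"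
    using proper_abelian by blast
  have "\<not> grp_exp G (carrier G) dvd 1"
  proof
    assume "grp_exp G (carrier G) dvd 1"
    then have "ord g = 1" if "g \<in> carrier G" for g
      using that unfolding grp_exp_def by (meson dvd_Lcm dvd_trans image_eqI nat_dvd_1_iff_1)
    then have "carrier G = {\<one>}"
      using ord_eq_1 by blast
    with nonabelian show False
      unfolding abelian_set_def by simp
  qed
  then show ?thesis
    unfolding exponent_critical_iff no_exponents by simp
qed

lemma centralizer_abelian_maximal_if_proper_subgroups_abelian:
  assumes proper_abelian: "\<And>H. subgroup H G \<Longrightarrow> H \<noteq> carrier G \<Longrightarrow> abelian_set G H"
    and u: "u \<in> carrier G" and v: "v \<in> carrier G" and uv: "u \<otimes> v \<noteq> v \<otimes> u"
  shows "maximal_subgroup (centralizer G u) G" "abelian_set G (centralizer G u)"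
proof -
  have sub: "subgroup (centralizer G u) G"
    using centralizer_subgroup[OF u] .
  have proper: "centralizer G u \<noteq> carrier G"
  proof
    assume "centralizer G u = carrier G"
    then have "v \<otimes> u = u \<otimes> v"
      using v unfolding centralizer_def by blast
    with uv show False
      by simp
  qed
  then show abelian: "abelian_set G (centralizer G u)"
    using proper_abelian[OF sub] by blast
  have "H = centralizer G u \<or> H = carrier G" if H: "subgroup H G" "centralizer G u \<subseteq> H" for H
  proof (rule ccontr)
    assume "\<not> (H = centralizer G u \<or> H = carrier G)"
    then obtain g where g: "g \<in> H" "g \<notin> centralizer G u" and abelian_H: "abelian_set G H"
      using H proper_abelian by blast
    have "u \<in> H"
      using H(2) u unfolding centralizer_def by blast
    with g abelian_H show False
      using subgroup.subset[OF H(1)] unfolding abelian_set_def centralizer_def by blast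
  qed
  then show "maximal_subgroup (centralizer G u) G"
    unfolding maximal_subgroup_def using sub proper by blast
qed

lemma inter_abelian_maximal_subgroups_subset_center:
  assumes M1: "maximal_subgroup M1 G" "abelian_set G M1"
    and M2: "maximal_subgroup M2 G" "abelian_set G M2" and distinct: "M1 \<noteq> M2"
  shows "M1 \<inter> M2 \<subseteq> center G"
proof
  fix z
  assume z: "z \<in> M1 \<inter> M2"
  have M_carrier: "M1 \<subseteq> carrier G" "M2 \<subseteq> carrier G"
    using M1(1) M2(1) unfolding maximal_subgroup_def by (auto dest: subgroup.subset)
  then have zc: "z \<in> carrier G"
    using z by blast
  have "M1 \<subseteq> centralizer G z" "M2 \<subseteq> centralizer G z"
    using z M1(2) M2(2) M_carrier unfolding abelian_set_def centralizer_def by auto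
  then have "centralizer G z = carrier G"
    using M1(1) M2(1) distinct centralizer_subgroup[OF zc]
    unfolding maximal_subgroup_def by (metis subgroup.subset)
  then show "z \<in> center G"
    using zc unfolding center_def centralizer_def by force
qed

end

section \<open>Finite p-groups\<close>

locale p_group = group +
  fixes p n :: nat
  assumes prime_p: "Factorial_Ring.prime p"
    and finite_carrier: "finite (carrier G)"
    and card_carrier: "card (carrier G) = p ^ n"
begin

lemma card_subgroup_prime_power:
  assumes "subgroup H G"
  obtains j where "card H = p ^ j"
proof -
  have "card H dvd p ^ n"
    using lagrange[OF assms] card_carrier unfolding order_def by (metis dvd_triv_right)
  then show ?thesis
    using that divides_primepow_nat[OF prime_p] by blast
qed

lemma coprime_ord:
  assumes "g \<in> carrier G" "\<not> int p dvd d"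
  shows "coprime d (int (ord g))"
proof -
  obtain k where "ord g = p ^ k"
    using card_subgroup_prime_power[OF generate_is_subgroup[of "{g}"]] assms(1)
    by (metis empty_subsetI generate_pow_card insert_subset)
  moreover have "coprime d (int p)"
    using assms(2) prime_p prime_imp_coprime[of "int p" d] by (simp add: coprime_commute)
  ultimately show ?thesis
    by simp
qed

lemma normalizer_grows:
  assumes H: "subgroup H G" and proper: "H \<noteq> carrier G"
  shows "H \<subset> normalizer G H"
proof -
  interpret conj: group_action G "{K. K \<subseteq> carrier G}" "subset_conjugation G"
    by (rule subset_conjugation_action)
  interpret conj_H: group_action "G\<lparr>carrier := H\<rparr>" "{K. K \<subseteq> carrier G}" "subset_conjugation G"
    by (rule conj.induced_action[OF H])
  have H_carrier: "H \<subseteq> carrier G"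
    using subgroup.subset[OF H] .
  then have H_E: "H \<in> {K. K \<subseteq> carrier G}"
    by simp
  (* A self-normalizing H has p^k > 1 conjugates; counting those fixed by H modulo p yields one
     besides H itself, and self-normalization forces it to be H. *)
  have "normalizer G H \<noteq> H"
  proof
    assume self_normalizing: "normalizer G H = H"
    define S where "S = orbit G (subset_conjugation G) H"
    define F where "F = {K \<in> S. \<forall>h\<in>H. subset_conjugation G h K = K}"
    have S_image: "S = (\<lambda>g. subset_conjugation G g H) ` carrier G"
      unfolding S_def orbit_def by blast
    have S_E: "S \<subseteq> {K. K \<subseteq> carrier G}"
      unfolding S_image using conj.element_image[OF _ H_E] by blast
    have "\<exists>g\<in>carrier G. subset_conjugation G g H \<noteq> H"
      using proper H_carrier self_normalizing unfolding normalizer_eq_stabilizer stabilizer_def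
      by blast
    then have "p dvd card S"
      unfolding S_def using conj.prime_dvd_card_orbit[OF prime_p card_carrier H_E] by blast
    moreover obtain j where "card H = p ^ j"
      using card_subgroup_prime_power[OF H] by blast
    moreover have "subset_conjugation G h K \<in> S" if "h \<in> H" "K \<in> S" for h K
      using that H_carrier conj.composition_rule[OF H_E, of h] unfolding S_image by force
    ultimately have "p dvd card F"
      using conj_H.card_fixed_points_mod_prime[OF prime_p, of j S] S_E finite_carrier
      unfolding F_def S_image by (auto simp: mod_eq_0_iff_dvd[symmetric])
    then have "F \<noteq> {H}"
      using prime_p by auto
    moreover have "H \<in> F"
      using conj.orbit_refl[OF H_E] subset_normalizer[OF H]
      unfolding F_def S_def normalizer_eq_stabilizer stabilizer_def by auto
    ultimately obtain K where K: "K \<in> F" "K \<noteq> H"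
      by blast
    then obtain y where y: "y \<in> carrier G" "K = subset_conjugation G y H"
      unfolding F_def S_image by blast
    have "K = H"
      using fixed_conjugate_eq_if_self_normalizing[OF H _ self_normalizing y(1)] K(1) y(2)
        finite_subset[OF H_carrier finite_carrier]
      unfolding F_def by blast
    with K(2) show False ..
  qed
  then show ?thesis
    using subset_normalizer[OF H] by blast
qed

lemma maximal_subgroup_normal:
  assumes M: "maximal_subgroup M G"
  shows "M \<lhd> G"
proof -
  have M_sub: "subgroup M G" and proper: "M \<noteq> carrier G"
    and maximal: "\<And>H. subgroup H G \<Longrightarrow> M \<subseteq> H \<Longrightarrow> H = M \<or> H = carrier G"
    using M unfolding maximal_subgroup_def by auto
  have M_carrier: "M \<subseteq> carrier G"
    using subgroup.subset[OF M_sub] .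
  have "normalizer G M = carrier G"
    using maximal[OF normalizer_imp_subgroup[OF M_carrier]] normalizer_grows[OF M_sub proper] by blast
  then have "subset_conjugation G g M = M" if "g \<in> carrier G" for g
    using that unfolding normalizer_eq_stabilizer stabilizer_def by blast
  then show ?thesis
    using M_sub M_carrier by (intro normal_invI) (auto simp: subset_conjugation_eq_image)
qed

lemma int_pow_prime_in_maximal_subgroup:
  assumes M: "maximal_subgroup M G" and g: "g \<in> carrier G"
  shows "g [^] p \<in> M"
proof (rule ccontr)
  assume not_in: "g [^] p \<notin> M"
  have M_sub: "subgroup M G"
    using M unfolding maximal_subgroup_def by auto
  obtain m k where m: "m \<in> M" and g_eq: "g = m \<otimes> (g [^] p) [^] (k::int)"
    using maximal_normal_subgroup_mult_int_pow[OF M maximal_subgroup_normal[OF M], of "g [^] p" g]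
      g not_in by auto
  have mc: "m \<in> carrier G"
    using m subgroup.subset[OF M_sub] by blast
  have "g [^] (1 + (- k) * int p) = g \<otimes> inv ((g [^] p) [^] k)"
    using g by (simp add: int_pow_diff int_pow_pow mult.commute flip: int_pow_int)
  also have "\<dots> = m"
    using g mc by (subst (1) g_eq) (simp add: m_assoc)
  finally have "g [^] (1 + (- k) * int p) \<in> M"
    using m by simp
  moreover have "\<not> int p dvd 1 + (- k) * int p"
    using prime_p dvd_add_times_triv_right_iff[of "int p" 1 "- k"] by (auto simp: prime_nat_iff)
  ultimately have "g \<in> M"
    using mem_of_coprime_int_pow_mem[OF M_sub g] coprime_ord[OF g] by blast
  then show False
    using subgroup_int_pow_closed[OF M_sub, of g "int p"] not_in by (simp add: int_pow_int)
qed

lemma normal_subgroup_card_prime_subset_center: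
  assumes N: "N \<lhd> G" and card_N: "card N = p"
  shows "N \<subseteq> center G"
proof -
  interpret conj: group_action G "carrier G" "\<lambda>g. \<lambda>h \<in> carrier G. g \<otimes> h \<otimes> inv g"
    by (rule action_by_conjugation)
  have N_carrier: "N \<subseteq> carrier G"
    using N normal_imp_subgroup subgroup.subset by blast
  define F where "F = {x \<in> N. \<forall>g\<in>carrier G. (\<lambda>h \<in> carrier G. g \<otimes> h \<otimes> inv g) x = x}"
  have "card N mod p = card F mod p"
    unfolding F_def
    using conj.card_fixed_points_mod_prime[OF prime_p card_carrier _ N_carrier]
      finite_subset[OF N_carrier finite_carrier] normal.inv_op_closed2[OF N] N_carrier
    by (auto simp: subset_iff)
  then have "p dvd card F"
    using card_N by (simp add: mod_eq_0_iff_dvd[symmetric])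
  moreover have "\<one> \<in> F" "F \<subseteq> N"
    using N normal_imp_subgroup subgroup.one_closed unfolding F_def by auto
  moreover have "finite N"
    using card_N prime_gt_0_nat[OF prime_p] card_ge_0_finite by blast
  ultimately have "F = N"
    using card_N by (metis card_seteq card_gt_0_iff dvd_imp_le empty_iff finite_subset)
  have "x \<otimes> g = g \<otimes> x" if "x \<in> F" "g \<in> carrier G" for x g
  proof -
    have xc: "x \<in> carrier G"
      using that N_carrier unfolding F_def by blast
    then have "g \<otimes> x \<otimes> inv g = x"
      using that unfolding F_def by auto
    then show ?thesis
      using xc that(2) by (metis inv_solve_right m_closed)
  qed
  then show ?thesis
    using \<open>F = N\<close> N_carrier unfolding center_def by blast
qed

end

context two_generated_class_le_two_group
begin

lemma coords_in_subgroup: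
  assumes H: "subgroup H G" "derived G (carrier G) \<subseteq> H" and g: "coords g i j" "g \<in> H"
  shows "a [^] i \<otimes> b [^] j \<in> H"
proof -
  obtain w where w: "w \<in> derived G (carrier G)" "g = a [^] i \<otimes> b [^] j \<otimes> w"
    using g(1) unfolding coords_def by blast
  then have "a [^] i \<otimes> b [^] j = g \<otimes> inv w"
    using a b derived_in_center(2)[OF w(1)] by (simp add: m_assoc)
  then show ?thesis
    using H w(1) g(2) by (metis subgroup.m_closed subgroup.m_inv_closed subsetD)
qed

(* The adjugate of the coordinate matrix of x and y: x^s y^-j and x^-r y^i have coordinates
   (d, 0) and (0, d), where d is its determinant. *)
lemma determinant_int_pow_in_subgroup:
  assumes H: "subgroup H G" "derived G (carrier G) \<subseteq> H"
    and x: "coords x i j" "x \<in> H" and y: "coords y r s" "y \<in> H"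
  shows "a [^] (i * s - j * r) \<in> H" "b [^] (i * s - j * r) \<in> H"
proof -
  have "a [^] (s * i + - j * r) \<otimes> b [^] (s * j + - j * s) \<in> H"
    using coords_in_subgroup[OF H coords_mult[OF coords_int_pow[OF x(1), of s]
        coords_int_pow[OF y(1), of "- j"]]] x(2) y(2) H(1)
    by (auto intro: subgroup.m_closed subgroup_int_pow_closed)
  then show "a [^] (i * s - j * r) \<in> H"
    using a b by (simp add: algebra_simps)
  have "a [^] (- r * i + i * r) \<otimes> b [^] (- r * j + i * s) \<in> H"
    using coords_in_subgroup[OF H coords_mult[OF coords_int_pow[OF x(1), of "- r"]
        coords_int_pow[OF y(1), of i]]] x(2) y(2) H(1)
    by (auto intro: subgroup.m_closed subgroup_int_pow_closed)
  then show "b [^] (i * s - j * r) \<in> H"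
    using a b by (simp add: algebra_simps)
qed

lemma nonabelian_subgroup_eq_carrier:
  assumes "p_group G p n" and card_derived: "card (derived G (carrier G)) = p"
    and H: "subgroup H G" "\<not> abelian_set G H"
  shows "H = carrier G"
proof -
  interpret p_group G p n
    by fact
  define c where "c = commutator G a b"
  have c: "c \<in> carrier G" "ord c = p"
    using a b card_derived generate_pow_card[of c]
    unfolding c_def derived_eq_generate_commutator by auto
  obtain x y where xy: "x \<in> H" "y \<in> H" "x \<otimes> y \<noteq> y \<otimes> x"
    using H(2) unfolding abelian_set_def by blast
  have xy_carrier: "x \<in> carrier G" "y \<in> carrier G"
    using xy subgroup.subset[OF H(1)] by auto
  obtain i j r s where x_coords: "coords x i j" and y_coords: "coords y r s"
    using coords_exists xy_carrier by metis
  define d where "d = i * s - j * r"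
  have commutator_xy: "commutator G x y = c [^] d" "commutator G x y \<noteq> \<one>"
    using commutator_coords[OF x_coords y_coords] xy xy_carrier commutator_eq_one_iff
    unfolding c_def d_def by auto
  have p_not_dvd_d: "\<not> int p dvd d"
    using commutator_xy c by (auto simp: int_pow_eq_id)
  have "commutator G x y \<in> H"
    using xy H(1) unfolding commutator_def by (intro subgroup.m_closed subgroup.m_inv_closed) auto
  then have "c \<in> H"
    using mem_of_coprime_int_pow_mem[OF H(1) c(1)] commutator_xy coprime_ord[OF c(1) p_not_dvd_d] by simp
  then have derived_H: "derived G (carrier G) \<subseteq> H"
    unfolding derived_eq_generate_commutator c_def using H(1) by (intro generate_subgroup_incl) auto
  have "a [^] d \<in> H" "b [^] d \<in> H"
    using determinant_int_pow_in_subgroup[OF H(1) derived_H x_coords xy(1) y_coords xy(2)]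
    unfolding d_def by auto
  then have "a \<in> H" "b \<in> H"
    using mem_of_coprime_int_pow_mem[OF H(1)] coprime_ord[OF _ p_not_dvd_d] a b by auto
  then have "carrier G \<subseteq> H"
    using H(1) generate_subgroup_incl[of "{a, b}" H] generate_ab by auto
  then show ?thesis
    using subgroup.subset[OF H(1)] by blast
qed

end

context p_group
begin

lemma card_derived_eq_prime_if_abelian_maximal_subgroups:
  assumes nonabelian: "\<not> abelian_set G (carrier G)"
    and generators: "a \<in> carrier G" "b \<in> carrier G" "generate G {a, b} = carrier G"
    and M1: "maximal_subgroup M1 G" "abelian_set G M1"
    and M2: "maximal_subgroup M2 G" "abelian_set G M2" and distinct: "M1 \<noteq> M2"
  shows "card (derived G (carrier G)) = p"
proof -
  have in_center: "z \<in> center G" if "z \<in> M1" "z \<in> M2" for z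
    using that inter_abelian_maximal_subgroups_subset_center[OF M1 M2 distinct] by blast
  have "commutator G x y \<in> M1" "commutator G x y \<in> M2"
    if "x \<in> carrier G" "y \<in> carrier G" for x y
    using that commutator_in_maximal_normal_subgroup maximal_subgroup_normal M1(1) M2(1) by auto
  then interpret two_generated_class_le_two_group G a b
    using generators in_center by unfold_locales auto
  define c where "c = commutator G a b"
  have "a [^] p \<in> center G"
    using in_center int_pow_prime_in_maximal_subgroup[OF _ a] M1(1) M2(1) by blast
  then have "c [^] p = \<one>"
    using commutator_int_pow_left[OF a b, of "int p"] commutator_center_left[of "a [^] p" b] b
    unfolding c_def by (simp add: int_pow_int)
  moreover have "c \<noteq> \<one>"
    using nonabelian abelian_if_commutator_eq_one unfolding c_def by blast
  moreover have "c \<in> carrier G"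
    unfolding c_def using a b by simp
  ultimately have "ord c = p"
    using prime_p pow_eq_id ord_eq_1 unfolding prime_nat_iff by metis
  then show ?thesis
    using generate_pow_card[of c] a b unfolding derived_eq_generate_commutator c_def by simp
qed

lemma type_B_if_card_derived_eq_prime:
  assumes nonabelian: "\<not> abelian_set G (carrier G)"
    and generators: "a \<in> carrier G" "b \<in> carrier G" "generate G {a, b} = carrier G"
    and card_derived: "card (derived G (carrier G)) = p"
  shows "type_B G"
proof -
  have "derived G (carrier G) \<subseteq> center G"
    using normal_subgroup_card_prime_subset_center[OF derived_self_is_normal card_derived] .
  then interpret two_generated_class_le_two_group G a b
    using generators commutator_in_derived by unfold_locales auto
  have proper_abelian: "abelian_set G H" if "subgroup H G" "H \<noteq> carrier G" for H
    using that nonabelian_subgroup_eq_carrier[OF p_group_axioms card_derived] by blast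
  have ab: "a \<otimes> b \<noteq> b \<otimes> a"
    using nonabelian abelian_if_commutator_eq_one commutator_eq_one_iff a b by blast
  have "b \<in> centralizer G b" "b \<notin> centralizer G a"
    using a b ab unfolding centralizer_def by auto
  then have "centralizer G a \<noteq> centralizer G b"
    by blast
  moreover note
    exponent_critical_if_proper_subgroups_abelian[OF nonabelian proper_abelian]
    centralizer_abelian_maximal_if_proper_subgroups_abelian[OF proper_abelian a b ab]
    centralizer_abelian_maximal_if_proper_subgroups_abelian[OF proper_abelian b a ab[symmetric]]
  ultimately show ?thesis
    unfolding type_B_def by (intro conjI exI[of _ "centralizer G a"] exI[of _ "centralizer G b"])
qed

end

theorem theoremD:
  fixes P :: "('a, 'b) monoid_scheme" and p n :: nat
  assumes "group P" and "Factorial_Ring.prime p" and "finite (carrier P)"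
    and "card (carrier P) = p ^ n"
    and "\<not> abelian_set P (carrier P)"
  shows "type_B P \<longleftrightarrow> two_generated P \<and> card (derived P (carrier P)) = p"
proof -
  interpret p_group P p n
    using assms by (intro p_group.intro p_group_axioms.intro) auto
  show ?thesis
  proof
    assume type_B: "type_B P"
    then obtain M1 M2 where M: "maximal_subgroup M1 P" "abelian_set P M1"
      "maximal_subgroup M2 P" "abelian_set P M2" "M1 \<noteq> M2"
      unfolding type_B_def by blast
    have two_generated: "two_generated P"
      using two_generated_if_exponent_critical type_B assms(5) unfolding type_B_def by blast
    then obtain a b where "a \<in> carrier P" "b \<in> carrier P" "generate P {a, b} = carrier P"
      unfolding two_generated_def by blast
    with two_generated show "two_generated P \<and> card (derived P (carrier P)) = p"
      using card_derived_eq_prime_if_abelian_maximal_subgroups[OF assms(5) _ _ _ M] by blast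
  next
    assume "two_generated P \<and> card (derived P (carrier P)) = p"
    then show "type_B P"
      using type_B_if_card_derived_eq_prime[OF assms(5)] unfolding two_generated_def by blast
  qed
qed

end
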